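(* In the setting described in the context, let $\gamma_1,\ldots,\gamma_K>0$ and consider $$\mathbf{P3}:\quad \min_{\mathbf{p}_1,\ldots,\mathbf{p}_K\in\mathbb{C}^{M_t}}\sum_{k=1}^K\mathbf{p}_k^H\mathbf{p}_k\quad\text{s.t.}\quad \mathcal{C}_k\le 0,\ k=1,\ldots,K,$$ where $\mathcal{C}_k=1+\frac{1}{\sigma_n^2}\sum_{i\neq k}\mathbf{p}_i^H\mathbf{R}_k\mathbf{p}_i-\frac{1}{\sigma_n^2\gamma_k}\mathbf{p}_k^H\mathbf{R}_k\mathbf{p}_k$. Let $(\mathbf{p}_1,\ldots,\mathbf{p}_K)$ be an optimal solution of $\mathbf{P3}$ with optimal Lagrange multipliers $\mu_1,\ldots,\mu_K\ge0$, i.e. together they satisfy the KKT conditions $\mathbf{p}_k+\sum_{i\neq k}\frac{\mu_i}{\sigma_n^2}\mathbf{R}_i\mathbf{p}_k-\frac{\mu_k}{\sigma_n^2\gamma_k}\mathbf{R}_k\mathbf{p}_k=\mathbf{0}$ and $\mu_k\mathcal{C}_k=0$ for all $k$. Write $\mathbf{p}_k=\sqrt{\rho_k}\,\underline{\mathbf{p}}_k$ with $\rho_k\ge0$ and $\underline{\mathbf{p}}_k^H\underline{\mathbf{p}}_k=1$, and set $\mathbf{S}_k=\mu_k\mathbf{R}_k$ and $\mathbf{N}_k=\sigma_n^2\mathbf{I}+\sum_{i\neq k}\mu_i\mathbf{R}_i$. Then for each $k$, $\underline{\mathbf{p}}_k$ is a generalized eigenvector of the matrix pair $(\mathbf{S}_k,\mathbf{N}_k)$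 associated with its maximum generalized eigenvalue, and $\gamma_k$ equals this maximum generalized eigenvalue.
   Context: A base station with $M_t$ antennas serves $K$ single-antenna users; $\sigma_n^2>0$ is the noise variance. For each user $k$, $\mathbf{R}_k=\mathbb{E}\{\mathbf{h}_k\mathbf{h}_k^H\}=\beta_k^2\bar{\mathbf{h}}_k\bar{\mathbf{h}}_k^H+(1-\beta_k^2)\mathbf{V}\boldsymbol{\Lambda}_k\mathbf{V}^H\in\mathbb{C}^{M_t\times M_t}$, where $\bar{\mathbf{h}}_k\in\mathbb{C}^{M_t}$, $\beta_k\in[0,1]$, $\mathbf{V}\in\mathbb{C}^{M_t\times NM_t}$ is a fixed matrix (a Kronecker product of oversampled DFT matrices), and $\boldsymbol{\Lambda}_k$ is an $NM_t\times NM_t$ diagonal matrix with nonnegative diagonal entries; this is the covariance of the channel $\mathbf{h}_k=\beta_k\bar{\mathbf{h}}_k+\sqrt{1-\beta_k^2}\mathbf{V}(\mathbf{m}_k\odot\mathbf{w}_k)$ with $\mathbf{w}_k$ i.i.d. $\mathcal{CN}(0,1)$ entries and $\boldsymbol{\Lambda}_k=\mathrm{diag}(\mathbf{m}_k\odot\mathbf{m}_k)$. A generalized eigenvalue $\lambda$ of a pair $(\mathbf{S},\mathbf{N})$ with eigenvector $\mathbf{x}\neq\mathbf{0}$ satisfies $\mathbf{S}\mathbf{x}=\lambda\mathbf{N}\mathbf{x}$. *)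

theory Defs
  imports "Jordan_Normal_Form.Matrix" "Jordan_Normal_Form.Conjugate"
begin

definition hform :: "nat \<Rightarrow> complex mat \<Rightarrow> complex vec \<Rightarrow> complex" where
  "hform n A x = (\<Sum>a<n. \<Sum>b<n. cnj (x $ a) * A $$ (a, b) * x $ b)"

definition vnorm2 :: "nat \<Rightarrow> complex vec \<Rightarrow> complex" where
  "vnorm2 n x = (\<Sum>a<n. cnj (x $ a) * x $ a)"

(* Channel covariance R = beta^2 hbar hbar^H + (1 - beta^2) V Lambda V^H,
   with V an Mt x (NMt) matrix, Lambda = diag(lam 0, ..., lam (NMt-1)) *)
definition covR :: "nat \<Rightarrow> nat \<Rightarrow> real \<Rightarrow> complex vec \<Rightarrow> complex mat \<Rightarrow> (nat \<Rightarrow> real) \<Rightarrow> complex mat" where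
  "covR Mt L beta hbar V lam =
     mat Mt Mt (\<lambda>(a, b). complex_of_real (beta\<^sup>2) * (hbar $ a * cnj (hbar $ b))
       + complex_of_real (1 - beta\<^sup>2) *
         (\<Sum>j<L. V $$ (a, j) * complex_of_real (lam j) * cnj (V $$ (b, j))))"

definition gen_eigenvalue :: "nat \<Rightarrow> complex mat \<Rightarrow> complex mat \<Rightarrow> complex \<Rightarrow> bool" where
  "gen_eigenvalue n S N lambda \<longleftrightarrow>
     (\<exists>x \<in> carrier_vec n. x \<noteq> 0\<^sub>v n \<and> S *\<^sub>v x = lambda \<cdot>\<^sub>v (N *\<^sub>v x))"

(* lambda is the maximum generalized eigenvalue of (S, N) (ordering of HOL-Library.Complex_Order) *)
definition max_gen_eigenvalue :: "nat \<Rightarrow> complex mat \<Rightarrow> complex mat \<Rightarrow> complex \<Rightarrow> bool" where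
  "max_gen_eigenvalue n S N lambda \<longleftrightarrow>
     gen_eigenvalue n S N lambda \<and> (\<forall>l. gen_eigenvalue n S N l \<longrightarrow> l \<le> lambda)"

definition max_gen_eigenvector :: "nat \<Rightarrow> complex mat \<Rightarrow> complex mat \<Rightarrow> complex vec \<Rightarrow> bool" where
  "max_gen_eigenvector n S N x \<longleftrightarrow>
     (\<exists>lambda. max_gen_eigenvalue n S N lambda \<and> x \<in> carrier_vec n \<and> x \<noteq> 0\<^sub>v n
               \<and> S *\<^sub>v x = lambda \<cdot>\<^sub>v (N *\<^sub>v x))"

definition Ck :: "nat \<Rightarrow> nat \<Rightarrow> real \<Rightarrow> (nat \<Rightarrow> complex mat) \<Rightarrow> (nat \<Rightarrow> real)
                  \<Rightarrow> (nat \<Rightarrow> complex vec) \<Rightarrow> nat \<Rightarrow> real" where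
  "Ck Mt K sigma2 R gamma p k =
     1 + (1 / sigma2) * Re (\<Sum>i\<in>{0..<K} - {k}. hform Mt (R k) (p i))
       - (1 / (sigma2 * gamma k)) * Re (hform Mt (R k) (p k))"

definition feasibleP3 :: "nat \<Rightarrow> nat \<Rightarrow> real \<Rightarrow> (nat \<Rightarrow> complex mat) \<Rightarrow> (nat \<Rightarrow> real)
                  \<Rightarrow> (nat \<Rightarrow> complex vec) \<Rightarrow> bool" where
  "feasibleP3 Mt K sigma2 R gamma p \<longleftrightarrow>
     (\<forall>k<K. p k \<in> carrier_vec Mt \<and> Ck Mt K sigma2 R gamma p k \<le> 0)"

definition objP3 :: "nat \<Rightarrow> nat \<Rightarrow> (nat \<Rightarrow> complex vec) \<Rightarrow> real" where
  "objP3 Mt K p = (\<Sum>k<K. Re (vnorm2 Mt (p k)))"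

definition optimalP3 :: "nat \<Rightarrow> nat \<Rightarrow> real \<Rightarrow> (nat \<Rightarrow> complex mat) \<Rightarrow> (nat \<Rightarrow> real)
                  \<Rightarrow> (nat \<Rightarrow> complex vec) \<Rightarrow> bool" where
  "optimalP3 Mt K sigma2 R gamma p \<longleftrightarrow>
     feasibleP3 Mt K sigma2 R gamma p \<and>
     (\<forall>q. feasibleP3 Mt K sigma2 R gamma q \<longrightarrow> objP3 Mt K p \<le> objP3 Mt K q)"

end

(*
  Stationarity of the Lagrangian in p_k says S_k p_k = gamma_k N_k p_k, so gamma_k is a generalized
  eigenvalue of (S_k, N_k). It is the largest one because N_k - S_k / gamma_k is positive
  semidefinite. Otherwise some x has x^H (N_k - S_k / gamma_k) x < 0. Replace p_k by x and rescale
  all beams so that every SINR constraint becomes tight; this is possible because the constraints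
  are linear in the beam powers with a Z-matrix of coefficients, for which the positive multipliers
  mu certify the M-matrix property. With all constraints tight the power equals the Lagrangian,
  i.e. sum mu plus the (now negative) x-term, which is below sum mu = power of p, contradicting
  optimality.
*)
theory Submission
  imports Defs
begin

section \<open>Nonsingular M-matrices\<close>

text \<open>A positive \<open>q\<close> with \<open>q\<^sup>T M > 0\<close> certifies that the Z-matrix \<open>M\<close> is a nonsingular M-matrix.\<close>

definition M_matrix_certificate :: "nat \<Rightarrow> (nat \<Rightarrow> real) \<Rightarrow> (nat \<Rightarrow> nat \<Rightarrow> real) \<Rightarrow> bool" where
  "M_matrix_certificate n q M \<longleftrightarrow>
     (\<forall>i<n. 0 < q i) \<and> (\<forall>i<n. \<forall>j<n. i \<noteq> j \<longrightarrow> M i j \<le> 0) \<and> (\<forall>j<n. 0 < (\<Sum>i<n. q i * M i j))"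

lemma M_matrix_certificate_diag_pos:
  assumes cert: "M_matrix_certificate n q M" and i: "i < n"
  shows "0 < M i i"
proof -
  have "(\<Sum>l\<in>{..<n} - {i}. q l * M l i) \<le> 0"
    using cert i by (intro sum_nonpos mult_nonneg_nonpos) (auto simp: M_matrix_certificate_def less_imp_le)
  moreover have "(\<Sum>l<n. q l * M l i) = q i * M i i + (\<Sum>l\<in>{..<n} - {i}. q l * M l i)"
    using i by (simp add: sum.remove)
  moreover have "0 < (\<Sum>l<n. q l * M l i)" "0 < q i"
    using cert i by (auto simp: M_matrix_certificate_def)
  ultimately have "0 < q i * M i i" by linarith
  with \<open>0 < q i\<close> show ?thesis by (simp add: zero_less_mult_iff)
qed

lemma M_matrix_certificate_schur_complement:
  assumes cert: "M_matrix_certificate (Suc n) q M"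
  shows "M_matrix_certificate n q (\<lambda>i j. M i j - M i n * M n j / M n n)"
  unfolding M_matrix_certificate_def
proof (intro conjI allI impI)
  have q: "\<And>i. i < Suc n \<Longrightarrow> 0 < q i" and Z: "\<And>i j. i < Suc n \<Longrightarrow> j < Suc n \<Longrightarrow> i \<noteq> j \<Longrightarrow> M i j \<le> 0"
    and col: "\<And>j. j < Suc n \<Longrightarrow> 0 < (\<Sum>i<Suc n. q i * M i j)"
    using cert by (auto simp: M_matrix_certificate_def)
  have m: "0 < M n n" using M_matrix_certificate_diag_pos[OF cert] by simp
  fix i j
  show "i < n \<Longrightarrow> 0 < q i" using q by simp
  show "i < n \<Longrightarrow> j < n \<Longrightarrow> i \<noteq> j \<Longrightarrow> M i j - M i n * M n j / M n n \<le> 0"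
  proof -
    assume "i < n" "j < n" "i \<noteq> j"
    hence "0 \<le> M i n * M n j / M n n" "M i j \<le> 0"
      using Z[of i n] Z[of n j] Z[of i j] m by (simp_all add: mult_nonpos_nonpos)
    thus ?thesis by linarith
  qed
  assume j: "j < n"
  have last_col: "- (q n * M n n) < (\<Sum>i<n. q i * M i n)" using col[of n] by simp
  have "q n * M n j \<le> - (M n j / M n n) * (\<Sum>i<n. q i * M i n)"
  proof -
    have "0 \<le> - (M n j / M n n)" using Z[of n j] j m by (simp add: divide_nonpos_pos)
    hence "- (M n j / M n n) * - (q n * M n n) \<le> - (M n j / M n n) * (\<Sum>i<n. q i * M i n)"
      using last_col by (intro mult_left_mono) auto
    thus ?thesis using m by (simp add: mult.commute)
  qed
  moreover have "(\<Sum>i<n. q i * (M i j - M i n * M n j / M n n))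
      = (\<Sum>i<n. q i * M i j) - (M n j / M n n) * (\<Sum>i<n. q i * M i n)"
    by (simp add: right_diff_distrib sum_subtractf sum_distrib_left mult_ac)
  ultimately show "0 < (\<Sum>i<n. q i * (M i j - M i n * M n j / M n n))"
    using col[of j] j by simp
qed

lemma schur_complement_back_substitution:
  fixes M :: "nat \<Rightarrow> nat \<Rightarrow> real"
  assumes m: "M n n \<noteq> 0"
    and sol: "\<And>i. i < n \<Longrightarrow> (\<Sum>j<n. (M i j - M i n * M n j / M n n) * r j) = b i - M i n * b n / M n n"
    and i: "i < Suc n"
  shows "(\<Sum>j<Suc n. M i j * (r(n := (b n - (\<Sum>j<n. M n j * r j)) / M n n)) j) = b i"
proof -
  define x where "x = (b n - (\<Sum>j<n. M n j * r j)) / M n n"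
  have "(\<Sum>j<n. M i j * (r(n := x)) j) = (\<Sum>j<n. M i j * r j)"
    by (intro sum.cong) auto
  hence "(\<Sum>j<Suc n. M i j * (r(n := x)) j) = (\<Sum>j<n. M i j * r j) + M i n * (b n - (\<Sum>j<n. M n j * r j)) / M n n"
    by (simp add: x_def)
  also have "\<dots> = b i"
  proof (cases "i = n")
    case False
    with i have "i < n" by simp
    have "(\<Sum>j<n. (M i j - M i n * M n j / M n n) * r j)
        = (\<Sum>j<n. M i j * r j - M i n / M n n * (M n j * r j))"
      by (intro sum.cong) (auto simp: algebra_simps)
    also have "\<dots> = (\<Sum>j<n. M i j * r j) - M i n / M n n * (\<Sum>j<n. M n j * r j)"
      by (simp add: sum_subtractf sum_distrib_left)
    finally have "(\<Sum>j<n. M i j * r j) - M i n / M n n * (\<Sum>j<n. M n j * r j) = b i - M i n * b n / M n n"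
      using sol[OF \<open>i < n\<close>] by simp
    moreover have "M i n * (b n - (\<Sum>j<n. M n j * r j)) / M n n
        = M i n * b n / M n n - M i n / M n n * (\<Sum>j<n. M n j * r j)"
      by (simp add: right_diff_distrib diff_divide_distrib)
    ultimately show ?thesis by linarith
  qed (use m in simp)
  finally show ?thesis by (simp add: x_def)
qed

lemma M_matrix_certificate_nonneg_solution:
  assumes "M_matrix_certificate n q M" and "\<And>i. i < n \<Longrightarrow> 0 \<le> b i"
  shows "\<exists>r. (\<forall>i<n. 0 \<le> r i) \<and> (\<forall>i<n. (\<Sum>j<n. M i j * r j) = b i)"
  using assms
proof (induction n arbitrary: M b)
  case 0
  then show ?case by simp
next
  case (Suc n)
  have Z: "\<And>i j. i < Suc n \<Longrightarrow> j < Suc n \<Longrightarrow> i \<noteq> j \<Longrightarrow> M i j \<le> 0"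
    using Suc.prems(1) by (auto simp: M_matrix_certificate_def)
  have m: "0 < M n n" using M_matrix_certificate_diag_pos[OF Suc.prems(1)] by simp
  have b'_nonneg: "0 \<le> b i - M i n * b n / M n n" if "i < n" for i
  proof -
    have "M i n * b n / M n n \<le> 0"
      using Z[of i n] Suc.prems(2)[of n] m that by (simp add: divide_nonpos_pos mult_nonpos_nonneg)
    thus ?thesis using Suc.prems(2)[of i] that by simp
  qed
  obtain r where r_nonneg: "\<forall>i<n. 0 \<le> r i"
    and r_sol: "\<forall>i<n. (\<Sum>j<n. (M i j - M i n * M n j / M n n) * r j) = b i - M i n * b n / M n n"
    using Suc.IH[where b = "\<lambda>i. b i - M i n * b n / M n n",
        OF M_matrix_certificate_schur_complement[OF Suc.prems(1)] b'_nonneg]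
    by blast
  have "(\<Sum>j<n. M n j * r j) \<le> 0"
    using Z r_nonneg by (intro sum_nonpos mult_nonpos_nonneg) auto
  hence "0 \<le> (b n - (\<Sum>j<n. M n j * r j)) / M n n"
    using Suc.prems(2)[of n] m by simp
  define r' where "r' = r(n := (b n - (\<Sum>j<n. M n j * r j)) / M n n)"
  have "\<forall>i<Suc n. 0 \<le> r' i"
    using r_nonneg \<open>0 \<le> (b n - (\<Sum>j<n. M n j * r j)) / M n n\<close> by (simp add: r'_def less_Suc_eq)
  moreover have "\<forall>i<Suc n. (\<Sum>j<Suc n. M i j * r' j) = b i"
    unfolding r'_def using m r_sol by (intro allI impI schur_complement_back_substitution) auto
  ultimately show ?case by blast
qed

section \<open>Hermitian forms and generalized eigenvalues\<close>

lemma hform_mat: "hform n (mat n n f) x = (\<Sum>a<n. \<Sum>b<n. cnj (x $ a) * f (a, b) * x $ b)"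
  unfolding hform_def by (intro sum.cong refl) simp

lemma hform_eq_cscalar_prod:
  assumes "A \<in> carrier_mat n n" "x \<in> carrier_vec n"
  shows "hform n A x = (A *\<^sub>v x) \<bullet>c x"
  using assms unfolding hform_def
  by (simp add: scalar_prod_def sum_distrib_left sum_distrib_right mult_ac atLeast0LessThan)

lemma vnorm2_eq_cscalar_prod: "x \<in> carrier_vec n \<Longrightarrow> vnorm2 n x = x \<bullet>c x"
  unfolding vnorm2_def scalar_prod_def by (simp add: mult.commute atLeast0LessThan)

lemma hform_smult: "x \<in> carrier_vec n \<Longrightarrow> hform n A (c \<cdot>\<^sub>v x) = cnj c * c * hform n A x"
  unfolding hform_def by (simp add: sum_distrib_left mult_ac)

lemma hform_smult_sqrt:
  "x \<in> carrier_vec n \<Longrightarrow> 0 \<le> r \<Longrightarrow>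
    hform n A (complex_of_real (sqrt r) \<cdot>\<^sub>v x) = complex_of_real r * hform n A x"
  by (simp add: hform_smult flip: of_real_mult)

lemma hform_smult_mat: "A \<in> carrier_mat n n \<Longrightarrow> hform n (c \<cdot>\<^sub>m A) x = c * hform n A x"
  unfolding hform_def by (simp add: sum_distrib_left mult_ac)

lemma hform_zero [simp]: "hform n A (0\<^sub>v n) = 0"
  unfolding hform_def by simp

lemma hform_gen_eigen:
  assumes "S \<in> carrier_mat n n" "N \<in> carrier_mat n n" "x \<in> carrier_vec n"
    and "S *\<^sub>v x = l \<cdot>\<^sub>v (N *\<^sub>v x)"
  shows "hform n S x = l * hform n N x"
  using assms by (simp add: hform_eq_cscalar_prod[of _ n] smult_scalar_prod_distrib[of _ n])

lemma complex_mult_right_le_imp_le: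
  fixes a b d :: complex
  assumes "0 < d" "a * d \<le> b * d"
  shows "a \<le> b"
  using assms by (auto simp: less_eq_complex_def less_complex_def)

lemma gen_eigenvalue_le_of_hform_le:
  assumes S: "S \<in> carrier_mat n n" and N: "N \<in> carrier_mat n n"
    and le: "\<And>x. x \<in> carrier_vec n \<Longrightarrow> hform n S x \<le> c * hform n N x"
    and pos: "\<And>x. x \<in> carrier_vec n \<Longrightarrow> x \<noteq> 0\<^sub>v n \<Longrightarrow> 0 < hform n N x"
    and "gen_eigenvalue n S N l"
  shows "l \<le> c"
proof -
  obtain x where x: "x \<in> carrier_vec n" "x \<noteq> 0\<^sub>v n" and eig: "S *\<^sub>v x = l \<cdot>\<^sub>v (N *\<^sub>v x)"
    using \<open>gen_eigenvalue n S N l\<close> unfolding gen_eigenvalue_def by blast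
  have "l * hform n N x \<le> c * hform n N x"
    using le[OF x(1)] hform_gen_eigen[OF S N x(1) eig] by simp
  with pos[OF x] show ?thesis by (rule complex_mult_right_le_imp_le)
qed

lemma gen_eigen_eq_smult_cancel:
  fixes S N :: "complex mat"
  assumes S: "S \<in> carrier_mat n n" and N: "N \<in> carrier_mat n n" and x: "x \<in> carrier_vec n"
    and "c \<noteq> 0" and eig: "S *\<^sub>v (c \<cdot>\<^sub>v x) = l \<cdot>\<^sub>v (N *\<^sub>v (c \<cdot>\<^sub>v x))"
  shows "S *\<^sub>v x = l \<cdot>\<^sub>v (N *\<^sub>v x)"
proof -
  have "c \<cdot>\<^sub>v (S *\<^sub>v x) = S *\<^sub>v (c \<cdot>\<^sub>v x)" using mult_mat_vec[OF S x] by simp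
  also have "\<dots> = l \<cdot>\<^sub>v (c \<cdot>\<^sub>v (N *\<^sub>v x))" using eig mult_mat_vec[OF N x] by simp
  also have "\<dots> = c \<cdot>\<^sub>v (l \<cdot>\<^sub>v (N *\<^sub>v x))" by (simp add: smult_smult_assoc mult.commute)
  finally have "inverse c \<cdot>\<^sub>v (c \<cdot>\<^sub>v (S *\<^sub>v x)) = inverse c \<cdot>\<^sub>v (c \<cdot>\<^sub>v (l \<cdot>\<^sub>v (N *\<^sub>v x)))"
    by simp
  thus ?thesis using \<open>c \<noteq> 0\<close> by (simp add: smult_smult_assoc mult.assoc[symmetric])
qed

lemma hform_rank_one_nonneg: "0 \<le> hform n (mat n n (\<lambda>(a, b). v a * cnj (v b))) x"
proof -
  have "hform n (mat n n (\<lambda>(a, b). v a * cnj (v b))) x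
      = (\<Sum>a<n. cnj (x $ a) * v a) * cnj (\<Sum>a<n. cnj (x $ a) * v a)"
    unfolding hform_mat by (simp add: sum_product mult_ac)
  also have "0 \<le> \<dots>" using conjugate_square_positive[of "\<Sum>a<n. cnj (x $ a) * v a"] by simp
  finally show ?thesis .
qed

lemma covR_carrier: "covR Mt L beta h V lam \<in> carrier_mat Mt Mt"
  unfolding covR_def by simp

lemma hform_covR:
  "hform Mt (covR Mt L beta h V lam) x
     = complex_of_real (beta\<^sup>2) * hform Mt (mat Mt Mt (\<lambda>(a, b). h $ a * cnj (h $ b))) x
       + complex_of_real (1 - beta\<^sup>2) * (\<Sum>j<L. complex_of_real (lam j)
           * hform Mt (mat Mt Mt (\<lambda>(a, b). V $$ (a, j) * cnj (V $$ (b, j)))) x)"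
  unfolding covR_def hform_mat
  by (simp add: algebra_simps sum.distrib sum_distrib_left sum.swap[of _ "{..<L}"])

lemma covR_psd:
  assumes "0 \<le> beta" "beta \<le> 1" "\<And>j. j < L \<Longrightarrow> 0 \<le> lam j"
  shows "0 \<le> hform Mt (covR Mt L beta h V lam) x"
proof -
  have "0 \<le> complex_of_real (beta\<^sup>2)" "0 \<le> complex_of_real (1 - beta\<^sup>2)"
    using assms(1,2) by (simp_all add: less_eq_complex_def power_le_one)
  moreover have "0 \<le> complex_of_real (lam j)" if "j < L" for j
    using assms(3)[OF that] by (simp add: less_eq_complex_def)
  ultimately show ?thesis
    unfolding hform_covR using hform_rank_one_nonneg
    by (intro add_nonneg_nonneg mult_nonneg_nonneg sum_nonneg) auto
qed

section \<open>The power minimization problem and its KKT points\<close>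

lemma sum_split_diag:
  fixes f :: "nat \<Rightarrow> 'a::comm_monoid_add"
  assumes "j < K"
  shows "(\<Sum>i<K. f i) = f j + (\<Sum>i\<in>{0..<K} - {j}. f i)"
  using assms by (simp add: lessThan_atLeast0 sum.remove)

lemma sum_swap_offdiag:
  fixes F :: "nat \<Rightarrow> nat \<Rightarrow> 'a::comm_monoid_add"
  shows "(\<Sum>i<K. \<Sum>j\<in>{0..<K} - {i}. F i j) = (\<Sum>j<K. \<Sum>i\<in>{0..<K} - {j}. F i j)"
proof -
  have "(\<Sum>i<K. \<Sum>j\<in>{0..<K} - {i}. F i j) = (\<Sum>i<K. \<Sum>j\<in>{j \<in> {..<K}. i \<noteq> j}. F i j)"
    by (intro sum.cong refl) auto
  also have "\<dots> = (\<Sum>j<K. \<Sum>i\<in>{i \<in> {..<K}. i \<noteq> j}. F i j)"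
    by (rule sum.swap_restrict) auto
  also have "\<dots> = (\<Sum>j<K. \<Sum>i\<in>{0..<K} - {j}. F i j)"
    by (intro sum.cong refl) auto
  finally show ?thesis .
qed

lemma lagrangian_sum_exchange:
  fixes G :: "nat \<Rightarrow> nat \<Rightarrow> real" and e mu gamma :: "nat \<Rightarrow> real"
  assumes "s \<noteq> 0"
  shows "(\<Sum>j<K. e j) + (\<Sum>i<K. mu i * (1 + (1 / s) * (\<Sum>j\<in>{0..<K} - {i}. G i j) - (1 / (s * gamma i)) * G i i))
       = (\<Sum>i<K. mu i)
         + (\<Sum>j<K. s * e j + (\<Sum>i\<in>{0..<K} - {j}. mu i * G i j) - mu j * G j j / gamma j) / s"
proof -
  have "(\<Sum>i<K. mu i * (1 + (1 / s) * (\<Sum>j\<in>{0..<K} - {i}. G i j) - (1 / (s * gamma i)) * G i i))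
      = (\<Sum>i<K. mu i + (\<Sum>j\<in>{0..<K} - {i}. mu i * G i j) / s - (mu i * G i i / gamma i) / s)"
    by (intro sum.cong refl) (simp add: algebra_simps sum_distrib_left sum_divide_distrib)
  moreover have "(\<Sum>j<K. s * e j + (\<Sum>i\<in>{0..<K} - {j}. mu i * G i j) - mu j * G j j / gamma j) / s
      = (\<Sum>j<K. e j + (\<Sum>i\<in>{0..<K} - {j}. mu i * G i j) / s - (mu j * G j j / gamma j) / s)"
    using assms by (simp add: sum_divide_distrib diff_divide_distrib add_divide_distrib)
  ultimately show ?thesis
    using sum_swap_offdiag[of "\<lambda>i j. mu i * G i j / s" K]
    by (simp add: sum.distrib sum_subtractf sum_divide_distrib)
qed

locale sinr_problem =
  fixes Mt K :: nat and sigma2 :: real and R :: "nat \<Rightarrow> complex mat" and gamma :: "nat \<Rightarrow> real"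
  assumes sigma2_pos: "0 < sigma2"
    and R_carrier: "i < K \<Longrightarrow> R i \<in> carrier_mat Mt Mt"
    and R_psd: "i < K \<Longrightarrow> x \<in> carrier_vec Mt \<Longrightarrow> 0 \<le> hform Mt (R i) x"
    and gamma_pos: "i < K \<Longrightarrow> 0 < gamma i"
begin

lemma Re_hform_R_nonneg: "i < K \<Longrightarrow> x \<in> carrier_vec Mt \<Longrightarrow> 0 \<le> Re (hform Mt (R i) x)"
  using R_psd by (simp add: less_eq_complex_def)

lemma Ck_nonpos_imp_nonzero:
  assumes q: "\<And>j. j < K \<Longrightarrow> q j \<in> carrier_vec Mt" and i: "i < K"
    and "Ck Mt K sigma2 R gamma q i \<le> 0"
  shows "q i \<noteq> 0\<^sub>v Mt"
proof
  assume "q i = 0\<^sub>v Mt"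
  have "0 \<le> (\<Sum>j\<in>{0..<K} - {i}. Re (hform Mt (R i) (q j))) / sigma2"
    using q i sigma2_pos by (intro divide_nonneg_pos sum_nonneg Re_hform_R_nonneg) auto
  moreover have "Ck Mt K sigma2 R gamma q i = 1 + (\<Sum>j\<in>{0..<K} - {i}. Re (hform Mt (R i) (q j))) / sigma2"
    using \<open>q i = 0\<^sub>v Mt\<close> by (simp add: Ck_def Re_sum)
  ultimately show False
    using \<open>Ck Mt K sigma2 R gamma q i \<le> 0\<close> by linarith
qed

definition coupling_matrix :: "(nat \<Rightarrow> complex vec) \<Rightarrow> nat \<Rightarrow> nat \<Rightarrow> real" where
  "coupling_matrix w i j =
     (if i = j then Re (hform Mt (R i) (w i)) / gamma i else - Re (hform Mt (R i) (w j)))"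

lemma Ck_rescaled:
  assumes w: "\<And>j. j < K \<Longrightarrow> w j \<in> carrier_vec Mt" and r: "\<And>j. j < K \<Longrightarrow> 0 \<le> r j" and i: "i < K"
  shows "Ck Mt K sigma2 R gamma (\<lambda>j. complex_of_real (sqrt (r j)) \<cdot>\<^sub>v w j) i
       = 1 - (\<Sum>j<K. coupling_matrix w i j * r j) / sigma2"
proof -
  have "(\<Sum>j<K. coupling_matrix w i j * r j)
      = coupling_matrix w i i * r i + (\<Sum>j\<in>{0..<K} - {i}. coupling_matrix w i j * r j)"
    by (rule sum_split_diag[OF i])
  also have "(\<Sum>j\<in>{0..<K} - {i}. coupling_matrix w i j * r j)
      = - (\<Sum>j\<in>{0..<K} - {i}. r j * Re (hform Mt (R i) (w j)))"
    unfolding sum_negf[symmetric] by (intro sum.cong refl) (auto simp: coupling_matrix_def)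
  finally have C: "(\<Sum>j<K. coupling_matrix w i j * r j)
      = r i * Re (hform Mt (R i) (w i)) / gamma i - (\<Sum>j\<in>{0..<K} - {i}. r j * Re (hform Mt (R i) (w j)))"
    by (simp add: coupling_matrix_def)
  have "Re (\<Sum>j\<in>{0..<K} - {i}. hform Mt (R i) (complex_of_real (sqrt (r j)) \<cdot>\<^sub>v w j))
      = (\<Sum>j\<in>{0..<K} - {i}. r j * Re (hform Mt (R i) (w j)))"
    unfolding Re_sum using w r by (intro sum.cong refl) (simp add: hform_smult_sqrt)
  hence "Ck Mt K sigma2 R gamma (\<lambda>j. complex_of_real (sqrt (r j)) \<cdot>\<^sub>v w j) i
      = 1 + (1 / sigma2) * (\<Sum>j\<in>{0..<K} - {i}. r j * Re (hform Mt (R i) (w j)))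
          - (1 / (sigma2 * gamma i)) * (r i * Re (hform Mt (R i) (w i)))"
    unfolding Ck_def using hform_smult_sqrt[OF w[OF i] r[OF i]] by simp
  also have "\<dots> = 1 - (\<Sum>j<K. coupling_matrix w i j * r j) / sigma2"
    unfolding C using sigma2_pos gamma_pos[OF i] by (simp add: field_simps)
  finally show ?thesis .
qed

end

locale sinr_multipliers = sinr_problem +
  fixes mu :: "nat \<Rightarrow> real"
  assumes mu_nonneg: "i < K \<Longrightarrow> 0 \<le> mu i"
begin

definition Smat :: "nat \<Rightarrow> complex mat" where
  "Smat i = complex_of_real (mu i) \<cdot>\<^sub>m R i"

definition Nmat :: "nat \<Rightarrow> complex mat" where
  "Nmat i = mat Mt Mt (\<lambda>(a, b). (if a = b then complex_of_real sigma2 else 0)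
     + (\<Sum>j\<in>{0..<K} - {i}. complex_of_real (mu j) * R j $$ (a, b)))"

text \<open>\<open>lagrangian_term i x / sigma2\<close> is the part of the Lagrangian of P3 that depends on the
  beam \<open>x\<close> of user \<open>i\<close> (see \<open>lagrangian_identity\<close>).\<close>

definition lagrangian_term :: "nat \<Rightarrow> complex vec \<Rightarrow> real" where
  "lagrangian_term i x = Re (hform Mt (Nmat i) x) - Re (hform Mt (Smat i) x) / gamma i"

lemma Smat_carrier: "i < K \<Longrightarrow> Smat i \<in> carrier_mat Mt Mt"
  using R_carrier by (simp add: Smat_def)

lemma Nmat_carrier: "Nmat i \<in> carrier_mat Mt Mt"
  by (simp add: Nmat_def)

lemma index_Nmat_mult_vec:
  assumes "x \<in> carrier_vec Mt" "a < Mt"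
  shows "(Nmat i *\<^sub>v x) $ a
     = complex_of_real sigma2 * x $ a + (\<Sum>j\<in>{0..<K} - {i}. complex_of_real (mu j) * (R j *\<^sub>v x) $ a)"
proof -
  have dims: "dim_row (R j) = Mt" "dim_col (R j) = Mt" if "j < K" for j
    using R_carrier[OF that] by auto
  have "((if a = b then complex_of_real sigma2 else 0)
          + (\<Sum>j\<in>{0..<K} - {i}. complex_of_real (mu j) * R j $$ (a, b))) * x $ b
      = (if a = b then complex_of_real sigma2 * x $ a else 0)
          + (\<Sum>j\<in>{0..<K} - {i}. complex_of_real (mu j) * (R j $$ (a, b) * x $ b))" for b
    by (simp add: algebra_simps sum_distrib_left)
  with assms show ?thesis
    by (simp add: Nmat_def scalar_prod_def dims sum.distrib sum_distrib_left sum.swap[of _ "{0..<K} - {i}"])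
qed

lemma kkt_stationarity_imp_gen_eigen:
  assumes i: "i < K" and x: "x \<in> carrier_vec Mt"
    and stat: "vec Mt (\<lambda>a. x $ a
            + (\<Sum>j\<in>{0..<K} - {i}. complex_of_real (mu j / sigma2) * (R j *\<^sub>v x) $ a)
            - complex_of_real (mu i / (sigma2 * gamma i)) * (R i *\<^sub>v x) $ a) = 0\<^sub>v Mt"
  shows "Smat i *\<^sub>v x = complex_of_real (gamma i) \<cdot>\<^sub>v (Nmat i *\<^sub>v x)"
proof (rule eq_vecI)
  fix a assume "a < dim_vec (complex_of_real (gamma i) \<cdot>\<^sub>v (Nmat i *\<^sub>v x))"
  hence a: "a < Mt" by (simp add: Nmat_def)
  define T where "T = (\<Sum>j\<in>{0..<K} - {i}. complex_of_real (mu j) * (R j *\<^sub>v x) $ a)"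
  have "(\<Sum>j\<in>{0..<K} - {i}. complex_of_real (mu j / sigma2) * (R j *\<^sub>v x) $ a) = T / complex_of_real sigma2"
    by (simp add: T_def sum_divide_distrib)
  with arg_cong[OF stat, of "\<lambda>v. v $ a"] a
  have "x $ a + T / complex_of_real sigma2
      - complex_of_real (mu i) / (complex_of_real sigma2 * complex_of_real (gamma i)) * (R i *\<^sub>v x) $ a = 0"
    by simp
  hence "complex_of_real sigma2 * (complex_of_real (mu i) * (R i *\<^sub>v x) $ a)
      = complex_of_real sigma2 * (complex_of_real (gamma i) * (complex_of_real sigma2 * x $ a + T))"
    using sigma2_pos gamma_pos[OF i] by (simp add: field_simps)
  hence "complex_of_real (mu i) * (R i *\<^sub>v x) $ a
      = complex_of_real (gamma i) * (complex_of_real sigma2 * x $ a + T)"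
    using sigma2_pos by simp
  also have "\<dots> = (complex_of_real (gamma i) \<cdot>\<^sub>v (Nmat i *\<^sub>v x)) $ a"
    using a Nmat_carrier[of i] by (simp add: index_Nmat_mult_vec[OF x a] T_def)
  finally show "(Smat i *\<^sub>v x) $ a = (complex_of_real (gamma i) \<cdot>\<^sub>v (Nmat i *\<^sub>v x)) $ a"
    using a x R_carrier[OF i] by (simp add: Smat_def)
qed (use R_carrier[OF i] in \<open>simp add: Smat_def Nmat_def\<close>)

lemma hform_Smat: "i < K \<Longrightarrow> hform Mt (Smat i) x = complex_of_real (mu i) * hform Mt (R i) x"
  unfolding Smat_def using R_carrier by (simp add: hform_smult_mat)

lemma hform_Nmat:
  "hform Mt (Nmat i) x = complex_of_real sigma2 * vnorm2 Mt x
     + (\<Sum>j\<in>{0..<K} - {i}. complex_of_real (mu j) * hform Mt (R j) x)"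
proof -
  have "cnj (x $ a) * ((if a = b then complex_of_real sigma2 else 0)
          + (\<Sum>j\<in>{0..<K} - {i}. complex_of_real (mu j) * R j $$ (a, b))) * x $ b
      = (if a = b then complex_of_real sigma2 * (cnj (x $ a) * x $ a) else 0)
          + (\<Sum>j\<in>{0..<K} - {i}. complex_of_real (mu j) * (cnj (x $ a) * R j $$ (a, b) * x $ b))" for a b
    by (simp add: algebra_simps sum_distrib_left sum_distrib_right)
  then show ?thesis
    unfolding Nmat_def hform_mat hform_def vnorm2_def
    by (simp add: sum.distrib sum_distrib_left sum.swap[of _ "{0..<K} - {i}"])
qed

lemma lagrangian_term_expand:
  "i < K \<Longrightarrow> lagrangian_term i x = sigma2 * Re (vnorm2 Mt x)
     + (\<Sum>j\<in>{0..<K} - {i}. mu j * Re (hform Mt (R j) x)) - mu i * Re (hform Mt (R i) x) / gamma i"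
  by (simp add: lagrangian_term_def hform_Nmat hform_Smat Re_sum)

lemma hform_Nmat_pos:
  assumes x: "x \<in> carrier_vec Mt" "x \<noteq> 0\<^sub>v Mt"
  shows "0 < hform Mt (Nmat i) x"
proof -
  have "0 < vnorm2 Mt x" using x by (simp add: vnorm2_eq_cscalar_prod)
  hence "0 < complex_of_real sigma2 * vnorm2 Mt x"
    using sigma2_pos by (simp add: less_complex_def)
  moreover have "0 \<le> (\<Sum>j\<in>{0..<K} - {i}. complex_of_real (mu j) * hform Mt (R j) x)"
    using x mu_nonneg R_psd by (intro sum_nonneg mult_nonneg_nonneg) (auto simp: less_eq_complex_def)
  ultimately show ?thesis unfolding hform_Nmat by (rule add_pos_nonneg)
qed

lemma lagrangian_term_rescale:
  "i < K \<Longrightarrow> x \<in> carrier_vec Mt \<Longrightarrow> 0 \<le> r \<Longrightarrow>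
    lagrangian_term i (complex_of_real (sqrt r) \<cdot>\<^sub>v x) = r * lagrangian_term i x"
  by (simp add: lagrangian_term_def hform_smult_sqrt right_diff_distrib)

lemma lagrangian_identity:
  "objP3 Mt K q + (\<Sum>i<K. mu i * Ck Mt K sigma2 R gamma q i)
     = (\<Sum>i<K. mu i) + (\<Sum>j<K. lagrangian_term j (q j)) / sigma2"
  using lagrangian_sum_exchange[of sigma2 "\<lambda>j. Re (vnorm2 Mt (q j))" K mu "\<lambda>i j. Re (hform Mt (R i) (q j))" gamma]
    sigma2_pos
  by (simp add: objP3_def Ck_def Re_sum lagrangian_term_expand)

lemma coupling_matrix_column_sum:
  assumes j: "j < K"
  shows "(\<Sum>i<K. mu i * coupling_matrix w i j) = sigma2 * Re (vnorm2 Mt (w j)) - lagrangian_term j (w j)"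
proof -
  have "(\<Sum>i<K. mu i * coupling_matrix w i j)
      = mu j * coupling_matrix w j j + (\<Sum>i\<in>{0..<K} - {j}. mu i * coupling_matrix w i j)"
    by (rule sum_split_diag[OF j])
  also have "(\<Sum>i\<in>{0..<K} - {j}. mu i * coupling_matrix w i j)
      = - (\<Sum>i\<in>{0..<K} - {j}. mu i * Re (hform Mt (R i) (w j)))"
    unfolding sum_negf[symmetric] by (intro sum.cong refl) (auto simp: coupling_matrix_def)
  finally show ?thesis using j by (simp add: coupling_matrix_def lagrangian_term_expand)
qed

lemma exists_tight_rescaling:
  assumes mu_pos: "\<And>i. i < K \<Longrightarrow> 0 < mu i"
    and w: "\<And>j. j < K \<Longrightarrow> w j \<in> carrier_vec Mt"
    and below: "\<And>j. j < K \<Longrightarrow> lagrangian_term j (w j) < sigma2 * Re (vnorm2 Mt (w j))"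
  obtains r where "\<And>j. j < K \<Longrightarrow> 0 \<le> r j"
    and "\<And>i. i < K \<Longrightarrow> Ck Mt K sigma2 R gamma (\<lambda>j. complex_of_real (sqrt (r j)) \<cdot>\<^sub>v w j) i = 0"
proof -
  have "coupling_matrix w i j \<le> 0" if "i < K" "j < K" "i \<noteq> j" for i j
    using that w by (simp add: coupling_matrix_def Re_hform_R_nonneg)
  moreover have "0 < (\<Sum>i<K. mu i * coupling_matrix w i j)" if "j < K" for j
    using below[OF that] by (simp add: coupling_matrix_column_sum[OF that])
  ultimately have "M_matrix_certificate K mu (coupling_matrix w)"
    unfolding M_matrix_certificate_def using mu_pos by blast
  then obtain r where r: "\<forall>i<K. 0 \<le> r i" "\<forall>i<K. (\<Sum>j<K. coupling_matrix w i j * r j) = sigma2"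
    using M_matrix_certificate_nonneg_solution[where b = "\<lambda>_. sigma2"] sigma2_pos by force
  show thesis
    by (rule that[of r]) (use r w sigma2_pos in \<open>simp_all add: Ck_rescaled\<close>)
qed

lemma objP3_rescaled:
  assumes w: "\<And>j. j < K \<Longrightarrow> w j \<in> carrier_vec Mt" and r: "\<And>j. j < K \<Longrightarrow> 0 \<le> r j"
    and tight: "\<And>i. i < K \<Longrightarrow> Ck Mt K sigma2 R gamma (\<lambda>j. complex_of_real (sqrt (r j)) \<cdot>\<^sub>v w j) i = 0"
  shows "objP3 Mt K (\<lambda>j. complex_of_real (sqrt (r j)) \<cdot>\<^sub>v w j)
       = (\<Sum>i<K. mu i) + (\<Sum>j<K. r j * lagrangian_term j (w j)) / sigma2"
  using lagrangian_identity[of "\<lambda>j. complex_of_real (sqrt (r j)) \<cdot>\<^sub>v w j"] tight r w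
  by (simp add: lagrangian_term_rescale)

end

lemma sinr_multipliers_covR:
  assumes "0 < sigma2" and "\<forall>i<K. 0 \<le> beta i \<and> beta i \<le> 1" and "\<forall>i<K. \<forall>j<L. 0 \<le> lam i j"
    and "\<forall>i<K. R i = covR Mt L (beta i) (hbar i) V (lam i)"
    and "\<forall>i<K. 0 < gamma i" and "\<forall>i<K. 0 \<le> mu i"
  shows "sinr_multipliers Mt K sigma2 R gamma mu"
  by unfold_locales (use assms in \<open>auto simp: covR_carrier covR_psd\<close>)

locale sinr_kkt_point = sinr_multipliers +
  fixes p :: "nat \<Rightarrow> complex vec"
  assumes optimal: "optimalP3 Mt K sigma2 R gamma p"
    and stationary: "i < K \<Longrightarrow> Smat i *\<^sub>v p i = complex_of_real (gamma i) \<cdot>\<^sub>v (Nmat i *\<^sub>v p i)"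
    and slackness: "i < K \<Longrightarrow> mu i * Ck Mt K sigma2 R gamma p i = 0"
begin

lemma p_feasible: "feasibleP3 Mt K sigma2 R gamma p"
  using optimal by (simp add: optimalP3_def)

lemma p_carrier: "i < K \<Longrightarrow> p i \<in> carrier_vec Mt"
  using p_feasible by (simp add: feasibleP3_def)

lemma p_nonzero: "i < K \<Longrightarrow> p i \<noteq> 0\<^sub>v Mt"
  using p_feasible p_carrier by (intro Ck_nonpos_imp_nonzero) (auto simp: feasibleP3_def)

lemma lagrangian_term_p_eq_0:
  assumes i: "i < K"
  shows "lagrangian_term i (p i) = 0"
  using hform_gen_eigen[OF Smat_carrier[OF i] Nmat_carrier p_carrier[OF i] stationary[OF i]] gamma_pos[OF i]
  by (simp add: lagrangian_term_def)

lemma mu_pos: "i < K \<Longrightarrow> 0 < mu i"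
proof -
  assume i: "i < K"
  have "0 < Re (hform Mt (Nmat i) (p i))"
    using hform_Nmat_pos[OF p_carrier[OF i] p_nonzero[OF i]] by (simp add: less_complex_def)
  hence "mu i \<noteq> 0"
    using lagrangian_term_p_eq_0[OF i] by (auto simp: lagrangian_term_def hform_Smat[OF i])
  with mu_nonneg[OF i] show ?thesis by simp
qed

lemma objP3_p_eq_sum_mu: "objP3 Mt K p = (\<Sum>i<K. mu i)"
  using lagrangian_identity[of p] by (simp add: slackness lagrangian_term_p_eq_0)

lemma lagrangian_term_update_below:
  assumes k: "k < K" and x: "x \<in> carrier_vec Mt" and neg: "lagrangian_term k x < 0" and j: "j < K"
  shows "lagrangian_term j ((p(k := x)) j) < sigma2 * Re (vnorm2 Mt ((p(k := x)) j))"
proof (cases "j = k")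
  case True
  have "0 \<le> Re (vnorm2 Mt x)"
    using x conjugate_square_ge_0_vec[of x] by (simp add: vnorm2_eq_cscalar_prod less_eq_complex_def)
  hence "0 \<le> sigma2 * Re (vnorm2 Mt x)" using sigma2_pos by simp
  with neg True show ?thesis by simp
next
  case False
  have "0 < vnorm2 Mt (p j)" using p_carrier[OF j] p_nonzero[OF j] by (simp add: vnorm2_eq_cscalar_prod)
  with False sigma2_pos show ?thesis by (simp add: lagrangian_term_p_eq_0[OF j] less_complex_def)
qed

text \<open>If some \<open>x\<close> made the Lagrangian term of user \<open>k\<close> negative, replacing \<open>p k\<close> by \<open>x\<close>
  and rescaling all beams until every SINR constraint is tight would save power.\<close>

lemma lagrangian_term_nonneg:
  assumes k: "k < K" and x: "x \<in> carrier_vec Mt"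
  shows "0 \<le> lagrangian_term k x"
proof (rule ccontr)
  assume "\<not> 0 \<le> lagrangian_term k x"
  hence neg: "lagrangian_term k x < 0" by simp
  define w where "w = p(k := x)"
  have w: "w j \<in> carrier_vec Mt" if "j < K" for j
    using x p_carrier[OF that] by (simp add: w_def)
  obtain r where r: "\<And>j. j < K \<Longrightarrow> 0 \<le> r j"
    and tight: "\<And>i. i < K \<Longrightarrow> Ck Mt K sigma2 R gamma (\<lambda>j. complex_of_real (sqrt (r j)) \<cdot>\<^sub>v w j) i = 0"
    by (rule exists_tight_rescaling[of w])
      (use mu_pos w lagrangian_term_update_below[OF k x neg] in \<open>auto simp: w_def\<close>)
  define q where "q = (\<lambda>j. complex_of_real (sqrt (r j)) \<cdot>\<^sub>v w j)"
  have q: "q j \<in> carrier_vec Mt" if "j < K" for j using w[OF that] by (simp add: q_def)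
  have "objP3 Mt K p \<le> objP3 Mt K q"
    using optimal q tight by (simp add: optimalP3_def feasibleP3_def q_def)
  have "q k \<noteq> 0\<^sub>v Mt"
    by (rule Ck_nonpos_imp_nonzero[of q]) (use q k tight[OF k] in \<open>simp_all add: q_def\<close>)
  have "0 < r k"
  proof (rule ccontr)
    assume "\<not> 0 < r k"
    hence "q k = 0\<^sub>v Mt" using r[OF k] w[OF k] by (intro eq_vecI) (auto simp: q_def)
    with \<open>q k \<noteq> 0\<^sub>v Mt\<close> show False ..
  qed
  have "objP3 Mt K q = (\<Sum>i<K. mu i) + (\<Sum>j<K. r j * lagrangian_term j (w j)) / sigma2"
    unfolding q_def using w r tight by (rule objP3_rescaled)
  also have "(\<Sum>j<K. r j * lagrangian_term j (w j)) = r k * lagrangian_term k x"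
    using sum_split_diag[OF k, of "\<lambda>j. r j * lagrangian_term j (w j)"]
    by (simp add: w_def lagrangian_term_p_eq_0)
  finally have "objP3 Mt K q = objP3 Mt K p + r k * lagrangian_term k x / sigma2"
    by (simp add: objP3_p_eq_sum_mu)
  moreover have "r k * lagrangian_term k x / sigma2 < 0"
    using \<open>0 < r k\<close> neg sigma2_pos by (simp add: divide_neg_pos mult_pos_neg)
  ultimately show False using \<open>objP3 Mt K p \<le> objP3 Mt K q\<close> by simp
qed

lemma hform_Smat_le_gamma_Nmat:
  assumes k: "k < K" and x: "x \<in> carrier_vec Mt"
  shows "hform Mt (Smat k) x \<le> complex_of_real (gamma k) * hform Mt (Nmat k) x"
proof (cases "x = 0\<^sub>v Mt")
  case False
  have "Im (hform Mt (Nmat k) x) = 0"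
    using hform_Nmat_pos[OF x False] by (simp add: less_complex_def)
  moreover have "Im (hform Mt (Smat k) x) = 0"
    using R_psd[OF k x] by (simp add: hform_Smat[OF k] less_eq_complex_def)
  moreover have "Re (hform Mt (Smat k) x) \<le> gamma k * Re (hform Mt (Nmat k) x)"
    using lagrangian_term_nonneg[OF k x] gamma_pos[OF k]
    by (simp add: lagrangian_term_def field_simps)
  ultimately show ?thesis by (simp add: less_eq_complex_def)
qed simp

lemma max_gen_eigenvalue_gamma:
  assumes k: "k < K"
  shows "max_gen_eigenvalue Mt (Smat k) (Nmat k) (complex_of_real (gamma k))"
proof -
  have "l \<le> complex_of_real (gamma k)" if "gen_eigenvalue Mt (Smat k) (Nmat k) l" for l
    using Smat_carrier[OF k] Nmat_carrier hform_Smat_le_gamma_Nmat[OF k] hform_Nmat_pos that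
    by (rule gen_eigenvalue_le_of_hform_le)
  moreover have "gen_eigenvalue Mt (Smat k) (Nmat k) (complex_of_real (gamma k))"
    unfolding gen_eigenvalue_def using p_carrier[OF k] p_nonzero[OF k] stationary[OF k] by blast
  ultimately show ?thesis by (simp add: max_gen_eigenvalue_def)
qed

lemma max_gen_eigenvector_of_smult:
  assumes k: "k < K" and u: "u \<in> carrier_vec Mt" and p_eq: "p k = c \<cdot>\<^sub>v u"
  shows "max_gen_eigenvector Mt (Smat k) (Nmat k) u"
proof -
  have "c \<noteq> 0" "u \<noteq> 0\<^sub>v Mt"
    using p_nonzero[OF k] p_eq u by (auto intro!: eq_vecI)
  hence "Smat k *\<^sub>v u = complex_of_real (gamma k) \<cdot>\<^sub>v (Nmat k *\<^sub>v u)"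
    using stationary[OF k] p_eq
    by (intro gen_eigen_eq_smult_cancel[OF Smat_carrier[OF k] Nmat_carrier u]) auto
  with \<open>u \<noteq> 0\<^sub>v Mt\<close> show ?thesis
    unfolding max_gen_eigenvector_def using max_gen_eigenvalue_gamma[OF k] u by blast
qed

end

lemma (in sinr_multipliers) sinr_kkt_pointI:
  assumes "optimalP3 Mt K sigma2 R gamma p"
    and "\<forall>i<K. vec Mt (\<lambda>a. p i $ a
            + (\<Sum>j\<in>{0..<K} - {i}. complex_of_real (mu j / sigma2) * (R j *\<^sub>v p i) $ a)
            - complex_of_real (mu i / (sigma2 * gamma i)) * (R i *\<^sub>v p i) $ a) = 0\<^sub>v Mt"
    and "\<forall>i<K. mu i * Ck Mt K sigma2 R gamma p i = 0"
  shows "sinr_kkt_point Mt K sigma2 R gamma mu p"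
proof unfold_locales
  fix i assume i: "i < K"
  have "p i \<in> carrier_vec Mt" using assms(1) i by (simp add: optimalP3_def feasibleP3_def)
  then show "Smat i *\<^sub>v p i = complex_of_real (gamma i) \<cdot>\<^sub>v (Nmat i *\<^sub>v p i)"
    using assms(2) i by (simp add: kkt_stationarity_imp_gen_eigen)
qed (use assms in auto)

theorem theorem1:
  fixes Mt N K :: nat and sigma2 :: real
    and hbar :: "nat \<Rightarrow> complex vec" and beta :: "nat \<Rightarrow> real"
    and V :: "complex mat" and lam :: "nat \<Rightarrow> nat \<Rightarrow> real"
    and R :: "nat \<Rightarrow> complex mat"
    and gamma :: "nat \<Rightarrow> real" and p :: "nat \<Rightarrow> complex vec" and mu :: "nat \<Rightarrow> real"
    and rho :: "nat \<Rightarrow> real" and pu :: "nat \<Rightarrow> complex vec"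
    and S Nm :: "nat \<Rightarrow> complex mat" and k :: nat
  assumes sigma: "sigma2 > 0"
    and V: "V \<in> carrier_mat Mt (N * Mt)"
    and hbar: "\<forall>i<K. hbar i \<in> carrier_vec Mt"
    and beta: "\<forall>i<K. 0 \<le> beta i \<and> beta i \<le> 1"
    and lam: "\<forall>i<K. \<forall>j<N * Mt. 0 \<le> lam i j"
    and R_def: "\<forall>i<K. R i = covR Mt (N * Mt) (beta i) (hbar i) V (lam i)"
    and gamma: "\<forall>i<K. gamma i > 0"
    and opt: "optimalP3 Mt K sigma2 R gamma p"
    and mu_nonneg: "\<forall>i<K. mu i \<ge> 0"
    and stationarity: "\<forall>i<K. vec Mt (\<lambda>a. p i $ a
            + (\<Sum>j\<in>{0..<K} - {i}. complex_of_real (mu j / sigma2) * (R j *\<^sub>v p i) $ a)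
            - complex_of_real (mu i / (sigma2 * gamma i)) * (R i *\<^sub>v p i) $ a) = 0\<^sub>v Mt"
    and slackness: "\<forall>i<K. mu i * Ck Mt K sigma2 R gamma p i = 0"
    and decomp: "\<forall>i<K. rho i \<ge> 0 \<and> pu i \<in> carrier_vec Mt \<and> vnorm2 Mt (pu i) = 1
                     \<and> p i = complex_of_real (sqrt (rho i)) \<cdot>\<^sub>v pu i"
    and S_def: "\<forall>i<K. S i = complex_of_real (mu i) \<cdot>\<^sub>m R i"
    and N_def: "\<forall>i<K. Nm i = mat Mt Mt (\<lambda>(a, b). (if a = b then complex_of_real sigma2 else 0)
            + (\<Sum>j\<in>{0..<K} - {i}. complex_of_real (mu j) * R j $$ (a, b)))"
    and k: "k < K"
  shows "max_gen_eigenvector Mt (S k) (Nm k) (pu k)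
         \<and> max_gen_eigenvalue Mt (S k) (Nm k) (complex_of_real (gamma k))"
proof -
  interpret sinr_multipliers Mt K sigma2 R gamma mu
    using sinr_multipliers_covR[OF sigma beta lam R_def gamma mu_nonneg] .
  interpret sinr_kkt_point Mt K sigma2 R gamma mu p
    using sinr_kkt_pointI[OF opt stationarity slackness] .
  have "S k = Smat k" and "Nm k = Nmat k"
    using S_def N_def k by (simp_all add: Smat_def Nmat_def)
  with decomp k show ?thesis
    using max_gen_eigenvector_of_smult max_gen_eigenvalue_gamma by auto
qed

end
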